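(* Let $\epsilon<0.501$. Then there do not exist maps $f_r,f_c$ (where $f_r$ maps each row player's payoff matrix $R\in[0,1]^{n\times n}$ to a mixed strategy over rows and $f_c$ maps each column player's payoff matrix $C\in[0,1]^{n\times n}$ to a mixed strategy over columns, for every $n$) such that for every $n$ and every bimatrix game $(R,C)$ with $R,C\in[0,1]^{n\times n}$ the profile $(f_r(R),f_c(C))$ is an $\epsilon$-approximate Nash equilibrium. That is, if each player independently computes a mixed strategy from his own payoff matrix, an $\epsilon$-approximate Nash equilibrium cannot be guaranteed for $\epsilon<0.501$.
   Context: A bimatrix game $(R,C)$ has $n\times n$ payoff matrices with entries in $[0,1]$ for the row and column player. For mixed strategies $\mathbf{x},\mathbf{y}$ the payoffs are $\mathbf{x}^TR\mathbf{y}$ and $\mathbf{x}^TC\mathbf{y}$. $(\mathbf{x},\mathbf{y})$ is an $\epsilon$-approximate Nash equilibrium if for all pure strategies $i$: $\mathbf{e}_i^TR\mathbf{y}\le\mathbf{x}^TR\mathbf{y}+\epsilon$ and $\mathbf{x}^TC\mathbf{e}_i\le\mathbf{x}^TC\mathbf{y}+\epsilon$, where $\mathbf{e}_i$ is the $i$-th unit vector. *)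

theory Defs
  imports "HOL-Analysis.Analysis"
begin

definition payoff_matrix :: "nat \<Rightarrow> (nat \<Rightarrow> nat \<Rightarrow> real) \<Rightarrow> bool" where
  "payoff_matrix n A \<longleftrightarrow>
     (\<forall>i<n. \<forall>j<n. 0 \<le> A i j \<and> A i j \<le> 1) \<and>
     (\<forall>i j. (n \<le> i \<or> n \<le> j) \<longrightarrow> A i j = 0)"

definition mixed_strategy :: "nat \<Rightarrow> (nat \<Rightarrow> real) \<Rightarrow> bool" where
  "mixed_strategy n x \<longleftrightarrow> (\<forall>i<n. 0 \<le> x i) \<and> (\<Sum>i<n. x i) = 1"

definition payoff :: "nat \<Rightarrow> (nat \<Rightarrow> real) \<Rightarrow> (nat \<Rightarrow> nat \<Rightarrow> real) \<Rightarrow> (nat \<Rightarrow> real) \<Rightarrow> real" where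
  "payoff n x A y = (\<Sum>i<n. \<Sum>j<n. x i * A i j * y j)"

definition unit_vec :: "nat \<Rightarrow> nat \<Rightarrow> real" where
  "unit_vec i = (\<lambda>k. if k = i then 1 else 0)"

definition approx_nash ::
  "real \<Rightarrow> nat \<Rightarrow> (nat \<Rightarrow> nat \<Rightarrow> real) \<Rightarrow> (nat \<Rightarrow> nat \<Rightarrow> real) \<Rightarrow> (nat \<Rightarrow> real) \<Rightarrow> (nat \<Rightarrow> real) \<Rightarrow> bool" where
  "approx_nash \<epsilon> n R C x y \<longleftrightarrow>
     (\<forall>i<n. payoff n (unit_vec i) R y \<le> payoff n x R y + \<epsilon>) \<and>
     (\<forall>i<n. payoff n x C (unit_vec i) \<le> payoff n x C y + \<epsilon>)"

end

theory Submission
  imports Defs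
begin

(*
  If the row player's matrix is zero and the column player gets 1
  exactly in column t, then f_c must put weight at least 1 - eps on t. These n "aimed" strategies
  have total weight n, so at least half of the columns receive total weight at most 2, and a
  greedy choice among them yields g columns G whose aimed strategies put total weight
  W = O(g^2 / n) on the other columns of G.
  In a game where the column player is paid for guessing which of m blocks of g rows is played,
  f_c puts weight at most 1/m on some block j; as the column player could deviate to j, every
  f_r(R) puts mass P <= (1 + eps) m / (2m - 1) on that block B.
  Finally let R pay row i of B on all columns outside G and on the single column sigma(i) of G,
  for a bijection sigma : B -> G. Against the strategy aimed at sigma(i), row i earns nearly 1,
  while f_r(R) earns not much more than P; summing the deviation constraints over i gives
  1 <= eps + eps P + ((1 - eps) P + 2W) / g, which for n = 4000, g = 20, m = 100 forces
  eps >= 0.501.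
*)

lemma ex_le_average:
  fixes f :: "'a \<Rightarrow> real"
  assumes "finite A" "A \<noteq> {}"
  shows "\<exists>a\<in>A. real (card A) * f a \<le> sum f A"
proof -
  have "Min (f ` A) \<in> f ` A" using assms by simp
  then obtain a where "a \<in> A" "f a = Min (f ` A)" by force
  then show ?thesis using sum_bounded_below[of A "f a" f] assms by fastforce
qed

lemma ex_cheap_extension:
  fixes w :: "'a \<Rightarrow> 'a \<Rightarrow> real"
  assumes fin: "finite U" and S: "S \<subseteq> U" "card S < card U"
    and nonneg: "\<And>a b. a \<in> U \<Longrightarrow> b \<in> U \<Longrightarrow> 0 \<le> w a b"
    and in_sum: "\<And>c. c \<in> U \<Longrightarrow> (\<Sum>v\<in>U. w v c) \<le> \<alpha>"
    and out_sum: "\<And>c. c \<in> U \<Longrightarrow> (\<Sum>v\<in>U. w c v) \<le> \<beta>"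
  shows "\<exists>v\<in>U - S. real (card U - card S) * ((\<Sum>c\<in>S. w v c) + (\<Sum>c\<in>S. w c v))
           \<le> (\<alpha> + \<beta>) * real (card S)"
proof -
  define cost where "cost v = (\<Sum>c\<in>S. w v c) + (\<Sum>c\<in>S. w c v)" for v
  have "sum cost (U - S) \<le> sum cost U"
    using fin S(1) nonneg by (intro sum_mono2) (auto simp: cost_def intro!: add_nonneg_nonneg sum_nonneg)
  also have "\<dots> = (\<Sum>c\<in>S. \<Sum>v\<in>U. w v c) + (\<Sum>c\<in>S. \<Sum>v\<in>U. w c v)"
    unfolding cost_def sum.distrib by (simp add: sum.swap[of _ U])
  also have "\<dots> \<le> (\<Sum>c\<in>S. \<alpha>) + (\<Sum>c\<in>S. \<beta>)"
    using S(1) in_sum out_sum by (intro add_mono sum_mono) auto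
  finally have total: "sum cost (U - S) \<le> (\<alpha> + \<beta>) * real (card S)" by (simp add: algebra_simps)
  have "card (U - S) = card U - card S"
    using card_Diff_subset[OF finite_subset[OF S(1) fin] S(1)] .
  moreover from this have "U - S \<noteq> {}" using S(2) by force
  ultimately show ?thesis
    using ex_le_average[of "U - S" cost] fin total by (force simp: cost_def)
qed

lemma ex_sparse_subset:
  fixes w :: "'a \<Rightarrow> 'a \<Rightarrow> real"
  assumes fin: "finite U"
    and nonneg: "\<And>a b. a \<in> U \<Longrightarrow> b \<in> U \<Longrightarrow> 0 \<le> w a b"
    and diag: "\<And>a. a \<in> U \<Longrightarrow> w a a = 0"
    and in_sum: "\<And>c. c \<in> U \<Longrightarrow> (\<Sum>v\<in>U. w v c) \<le> \<alpha>"
    and out_sum: "\<And>c. c \<in> U \<Longrightarrow> (\<Sum>v\<in>U. w c v) \<le> \<beta>"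
    and "g < card U" "k \<le> g"
  shows "\<exists>S\<subseteq>U. card S = k \<and>
           (\<Sum>t\<in>S. \<Sum>c\<in>S. w t c) \<le> real k * ((\<alpha> + \<beta>) * real g / (real (card U) - real g))"
  using \<open>k \<le> g\<close>
proof (induction k)
  case 0
  show ?case by (intro exI[of _ "{}"]) simp
next
  case (Suc k)
  define q where "q = (\<alpha> + \<beta>) * real g / (real (card U) - real g)"
  from Suc obtain S where S: "S \<subseteq> U" "card S = k" "(\<Sum>t\<in>S. \<Sum>c\<in>S. w t c) \<le> real k * q"
    unfolding q_def by auto
  have "finite S" using S(1) fin finite_subset by blast
  define cost where "cost v = (\<Sum>c\<in>S. w v c) + (\<Sum>c\<in>S. w c v)" for v
  obtain v where v: "v \<in> U - S" "real (card U - k) * cost v \<le> (\<alpha> + \<beta>) * real k"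
    using ex_cheap_extension[OF fin S(1) _ nonneg in_sum out_sum] S(2) Suc.prems \<open>g < card U\<close>
    unfolding cost_def by fastforce
  have "0 \<le> cost v"
    using v(1) S(1) nonneg unfolding cost_def by (intro add_nonneg_nonneg sum_nonneg) auto
  then have "(real (card U) - real g) * cost v \<le> real (card U - k) * cost v"
    using Suc.prems by (intro mult_right_mono) auto
  also have "\<dots> \<le> (\<alpha> + \<beta>) * real g"
  proof -
    have "0 \<le> \<alpha> + \<beta>"
      using v(1) nonneg in_sum[of v] out_sum[of v] sum_nonneg[of U "\<lambda>u. w u v"] sum_nonneg[of U "w v"]
      by fastforce
    then have "(\<alpha> + \<beta>) * real k \<le> (\<alpha> + \<beta>) * real g"
      using Suc.prems by (intro mult_left_mono) auto
    then show ?thesis using v(2) by linarith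
  qed
  finally have "cost v \<le> q"
    unfolding q_def using \<open>g < card U\<close> by (simp add: field_simps mult.commute)
  have "(\<Sum>t\<in>insert v S. \<Sum>c\<in>insert v S. w t c) = (\<Sum>t\<in>S. \<Sum>c\<in>S. w t c) + cost v"
    using \<open>finite S\<close> v(1) diag unfolding cost_def by (simp add: sum.distrib)
  also have "\<dots> \<le> real (Suc k) * q" using S(3) \<open>cost v \<le> q\<close> by (simp add: algebra_simps)
  finally show ?case
    using S \<open>finite S\<close> v(1) unfolding q_def by (intro exI[of _ "insert v S"]) auto
qed

lemma payoff_eq_sum_rows: "payoff n x A y = (\<Sum>i<n. x i * (\<Sum>j<n. A i j * y j))"
  unfolding payoff_def by (simp add: sum_distrib_left mult.assoc)

lemma payoff_unit_vec_left: "i < n \<Longrightarrow> payoff n (unit_vec i) A y = (\<Sum>j<n. A i j * y j)"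
  unfolding payoff_eq_sum_rows unit_vec_def by (simp add: if_distrib[of "\<lambda>z. z * _"] cong: if_cong)

lemma payoff_unit_vec_right: "j < n \<Longrightarrow> payoff n x A (unit_vec j) = (\<Sum>i<n. x i * A i j)"
  unfolding payoff_eq_sum_rows unit_vec_def by (simp add: if_distrib cong: if_cong)

lemma mixed_strategyD:
  assumes "mixed_strategy n x"
  shows "i < n \<Longrightarrow> 0 \<le> x i" and "(\<Sum>i<n. x i) = 1" and "i < n \<Longrightarrow> x i \<le> 1"
proof -
  show nonneg: "i < n \<Longrightarrow> 0 \<le> x i" for i using assms by (simp add: mixed_strategy_def)
  show sum: "(\<Sum>i<n. x i) = 1" using assms by (simp add: mixed_strategy_def)
  show "i < n \<Longrightarrow> x i \<le> 1"
    using member_le_sum[of i "{..<n}" x] nonneg sum by auto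
qed

lemma mixed_strategy_ex_le_inverse:
  assumes "mixed_strategy n y" "0 < m" "m \<le> n"
  shows "\<exists>j<m. y j \<le> 1 / real m"
proof -
  obtain j where j: "j \<in> {..<m}" "real m * y j \<le> (\<Sum>k<m. y k)"
    using ex_le_average[of "{..<m}" y] \<open>0 < m\<close> by auto
  have "(\<Sum>k<m. y k) \<le> (\<Sum>k<n. y k)"
    using mixed_strategyD(1)[OF assms(1)] \<open>m \<le> n\<close> by (intro sum_mono2) auto
  then have "real m * y j \<le> 1" using j(2) mixed_strategyD(2)[OF assms(1)] by linarith
  then show ?thesis using j(1) \<open>0 < m\<close> by (auto simp: field_simps)
qed

lemma card_light_columns:
  fixes Y :: "nat \<Rightarrow> nat \<Rightarrow> real"
  assumes mixed: "\<And>v. v < n \<Longrightarrow> mixed_strategy n (Y v)"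
  shows "real n / 2 \<le> real (card {c. c < n \<and> (\<Sum>v<n. Y v c) \<le> 2})"
proof -
  define h where "h c = (\<Sum>v<n. Y v c)" for c
  define U where "U = {c. c < n \<and> h c \<le> 2}"
  have U: "U \<subseteq> {..<n}" "finite U" unfolding U_def by auto
  have "2 \<le> h c" if "c \<in> {..<n} - U" for c using that by (auto simp: U_def)
  then have "real (card ({..<n} - U)) * 2 \<le> (\<Sum>c\<in>{..<n} - U. h c)"
    by (rule sum_bounded_below)
  also have "\<dots> \<le> (\<Sum>c<n. h c)"
    using mixed_strategyD(1)[OF mixed] by (intro sum_mono2) (auto simp: h_def intro!: sum_nonneg)
  also have "\<dots> = real n"
    unfolding h_def by (subst sum.swap) (simp add: mixed_strategyD(2)[OF mixed])
  finally show ?thesis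
    using card_Diff_subset[OF U(2) U(1)] card_mono[OF finite_lessThan U(1)]
    by (simp add: of_nat_diff U_def h_def)
qed

lemma ex_nearly_disjoint_strategies:
  fixes Y :: "nat \<Rightarrow> nat \<Rightarrow> real"
  assumes mixed: "\<And>v. v < n \<Longrightarrow> mixed_strategy n (Y v)" and "2 * g < n"
  shows "\<exists>G\<subseteq>{..<n}. card G = g \<and>
           (\<Sum>t\<in>G. \<Sum>c\<in>G - {t}. Y t c) \<le> real g * (3 * real g / (real n / 2 - real g))"
proof -
  define h where "h c = (\<Sum>v<n. Y v c)" for c
  define U where "U = {c. c < n \<and> h c \<le> 2}"
  have U: "U \<subseteq> {..<n}" "finite U" unfolding U_def by auto
  have "real n / 2 \<le> real (card U)"
    using card_light_columns[OF mixed] by (simp add: U_def h_def)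
  then have "g < card U" using \<open>2 * g < n\<close> by linarith
  define w where "w a b = (if a = b then 0 else Y a b)" for a b
  have w_le: "w a b \<le> Y a b" if "b < n" for a b
    unfolding w_def using mixed_strategyD(1)[OF mixed] that by auto
  obtain G where G: "G \<subseteq> U" "card G = g"
    "(\<Sum>t\<in>G. \<Sum>c\<in>G. w t c) \<le> real g * ((2 + 1) * real g / (real (card U) - real g))"
  proof (rule exE[OF ex_sparse_subset[OF U(2), of w 2 1 g g]])
    show "0 \<le> w a b" if "a \<in> U" "b \<in> U" for a b
      using that U(1) mixed_strategyD(1)[OF mixed] by (auto simp: w_def)
    show "(\<Sum>v\<in>U. w v c) \<le> 2" if "c \<in> U" for c
    proof -
      have "(\<Sum>v\<in>U. w v c) \<le> (\<Sum>v\<in>U. Y v c)" using that U(1) w_le by (intro sum_mono) auto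
      also have "\<dots> \<le> h c"
        unfolding h_def using that U mixed_strategyD(1)[OF mixed] by (intro sum_mono2) auto
      finally show ?thesis using that by (simp add: U_def)
    qed
    show "(\<Sum>v\<in>U. w c v) \<le> 1" if "c \<in> U" for c
    proof -
      have "(\<Sum>v\<in>U. w c v) \<le> (\<Sum>v\<in>U. Y c v)" using U(1) w_le by (intro sum_mono) auto
      also have "\<dots> \<le> (\<Sum>v<n. Y c v)"
        using that U mixed_strategyD(1)[OF mixed] by (intro sum_mono2) auto
      finally show ?thesis using that U(1) mixed_strategyD(2)[OF mixed] by auto
    qed
  qed (use \<open>g < card U\<close> in \<open>auto simp: w_def\<close>)
  have "finite G" using G(1) U(2) finite_subset by blast
  have "(\<Sum>c\<in>G. w t c) = (\<Sum>c\<in>G - {t}. Y t c)" if "t \<in> G" for t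
    using sum.remove[OF \<open>finite G\<close> that, of "w t"] by (simp add: w_def)
  then have "(\<Sum>t\<in>G. \<Sum>c\<in>G - {t}. Y t c) = (\<Sum>t\<in>G. \<Sum>c\<in>G. w t c)" by simp
  also have "\<dots> \<le> real g * (3 * real g / (real (card U) - real g))" using G(3) by simp
  also have "\<dots> \<le> real g * (3 * real g / (real n / 2 - real g))"
    using \<open>real n / 2 \<le> real (card U)\<close> \<open>2 * g < n\<close>
    by (intro mult_left_mono divide_left_mono) auto
  finally show ?thesis using G(1,2) U(1) by blast
qed

lemma div_eq_iff_in_block:
  fixes g :: nat
  assumes "0 < g"
  shows "i div g = j \<longleftrightarrow> i \<in> {j * g..<j * g + g}"
proof
  assume "i div g = j"
  then show "i \<in> {j * g..<j * g + g}"
    using div_times_less_eq_dividend[of i g] dividend_less_div_times[OF assms, of i] by auto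
next
  assume "i \<in> {j * g..<j * g + g}"
  then show "i div g = j" by (intro div_nat_eqI) (auto simp: mult.commute)
qed

definition column_target :: "nat \<Rightarrow> nat \<Rightarrow> nat \<Rightarrow> nat \<Rightarrow> real" where
  "column_target n t i j = (if i < n \<and> j < n \<and> j = t then 1 else 0)"

definition block_matrix :: "nat \<Rightarrow> nat \<Rightarrow> nat \<Rightarrow> nat \<Rightarrow> real" where
  "block_matrix g m i j = (if j < m \<and> i div g = j then 1 else 0)"

definition matching_matrix :: "nat \<Rightarrow> nat set \<Rightarrow> nat set \<Rightarrow> (nat \<Rightarrow> nat) \<Rightarrow> nat \<Rightarrow> nat \<Rightarrow> real" where
  "matching_matrix n B G \<sigma> i j = (if i \<in> B \<and> j < n \<and> (j \<notin> G \<or> j = \<sigma> i) then 1 else 0)"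

lemma payoff_matrix_zero: "payoff_matrix n (\<lambda>_ _. 0)"
  by (simp add: payoff_matrix_def)

lemma payoff_matrix_column_target: "payoff_matrix n (column_target n t)"
  by (auto simp: payoff_matrix_def column_target_def)

lemma payoff_matrix_block_matrix:
  assumes "0 < g" "m * g \<le> n"
  shows "payoff_matrix n (block_matrix g m)"
proof -
  have rows: "i < n" if "i div g < m" for i
  proof (rule ccontr)
    assume "\<not> i < n"
    then have "m * g div g \<le> i div g" using assms by (intro div_le_mono) auto
    then show False using that \<open>0 < g\<close> by simp
  qed
  moreover have "m \<le> n" using le_trans[of m "m * g" n] assms by simp
  ultimately show ?thesis by (auto simp: payoff_matrix_def block_matrix_def dest: rows)
qed

lemma payoff_matrix_matching_matrix: "B \<subseteq> {..<n} \<Longrightarrow> payoff_matrix n (matching_matrix n B G \<sigma>)"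
  by (auto simp: payoff_matrix_def matching_matrix_def)

lemma block_matrix_row_sum:
  assumes "m \<le> n"
  shows "(\<Sum>j<n. block_matrix g m i j * y j) = (if i div g < m then y (i div g) else 0)"
proof -
  have "block_matrix g m i j * y j = (if j = i div g then (if i div g < m then y j else 0) else 0)" for j
    by (auto simp: block_matrix_def)
  then show ?thesis using assms by (simp add: sum.delta)
qed

lemma matching_matrix_row_sum:
  assumes "G \<subseteq> {..<n}" "\<sigma> ` B \<subseteq> G"
  shows "(\<Sum>j<n. matching_matrix n B G \<sigma> i j * y j) =
    (if i \<in> B then (\<Sum>j\<in>{..<n} - G. y j) + y (\<sigma> i) else 0)"
proof (cases "i \<in> B")
  case True
  have "finite G" using assms(1) finite_subset by blast
  have "(\<Sum>j<n. matching_matrix n B G \<sigma> i j * y j) =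
      (\<Sum>j\<in>{..<n} - G. matching_matrix n B G \<sigma> i j * y j) + (\<Sum>j\<in>G. matching_matrix n B G \<sigma> i j * y j)"
    using assms(1) by (simp add: sum.subset_diff)
  also have "\<dots> = (\<Sum>j\<in>{..<n} - G. y j) + (\<Sum>j\<in>G. if j = \<sigma> i then y j else 0)"
    using True assms(1) by (intro arg_cong2[where f="(+)"] sum.cong) (auto simp: matching_matrix_def)
  finally show ?thesis using True assms(2) \<open>finite G\<close> by (auto simp: sum.delta')
qed (simp add: matching_matrix_def)

lemma payoff_matching_matrix:
  assumes "B \<subseteq> {..<n}" "G \<subseteq> {..<n}" "\<sigma> ` B \<subseteq> G"
  shows "payoff n x (matching_matrix n B G \<sigma>) y =
    (\<Sum>k\<in>B. x k * y (\<sigma> k)) + (\<Sum>k\<in>B. x k) * (\<Sum>j\<in>{..<n} - G. y j)"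
proof -
  have "payoff n x (matching_matrix n B G \<sigma>) y =
      (\<Sum>k<n. if k \<in> B then x k * y (\<sigma> k) + x k * (\<Sum>j\<in>{..<n} - G. y j) else 0)"
    unfolding payoff_eq_sum_rows matching_matrix_row_sum[OF assms(2,3)]
    by (intro sum.cong) (auto simp: algebra_simps)
  also have "\<dots> = (\<Sum>k\<in>B. x k * y (\<sigma> k) + x k * (\<Sum>j\<in>{..<n} - G. y j))"
    using assms(1) by (simp add: sum.inter_restrict[symmetric] Int_absorb1)
  finally show ?thesis by (simp add: sum.distrib sum_distrib_right)
qed

lemma payoff_unit_vec_matching_matrix:
  assumes "B \<subseteq> {..<n}" "G \<subseteq> {..<n}" "\<sigma> ` B \<subseteq> G" "i \<in> B"
  shows "payoff n (unit_vec i) (matching_matrix n B G \<sigma>) y = (\<Sum>j\<in>{..<n} - G. y j) + y (\<sigma> i)"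
  using assms by (auto simp: payoff_unit_vec_left matching_matrix_row_sum)

lemma sum_bij_weighted_le:
  fixes x :: "'a \<Rightarrow> real" and y :: "'b \<Rightarrow> real"
  assumes \<sigma>: "bij_betw \<sigma> B G" and "finite B" "i \<in> B"
    and x: "\<And>k. k \<in> B \<Longrightarrow> 0 \<le> x k \<and> x k \<le> 1" and y: "\<And>c. c \<in> G \<Longrightarrow> 0 \<le> y c"
  shows "(\<Sum>k\<in>B. x k * y (\<sigma> k)) \<le> x i * y (\<sigma> i) + (\<Sum>c\<in>G - {\<sigma> i}. y c)"
proof -
  have "(\<Sum>k\<in>B - {i}. x k * y (\<sigma> k)) \<le> (\<Sum>k\<in>B - {i}. y (\<sigma> k))"
    using x y \<sigma> by (intro sum_mono mult_left_le_one_le) (auto simp: bij_betw_def)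
  also have "\<dots> = (\<Sum>c\<in>G - {\<sigma> i}. y c)"
    using bij_betw_DiffI[OF \<sigma>, of "{i}" "{\<sigma> i}"] \<open>i \<in> B\<close> \<sigma>
    by (intro sum.reindex_bij_betw) (auto simp: bij_betw_def)
  finally show ?thesis
    using sum.remove[OF \<open>finite B\<close> \<open>i \<in> B\<close>, of "\<lambda>k. x k * y (\<sigma> k)"] by simp
qed

lemma column_target_row_sum:
  "i < n \<Longrightarrow> t < n \<Longrightarrow> (\<Sum>j<n. column_target n t i j * y j) = y t"
  by (simp add: column_target_def if_distrib[of "\<lambda>z. z * _"] sum.delta' cong: if_cong)

locale uncoupled_approx_nash =
  fixes \<epsilon> :: real and n :: nat and fr fc :: "(nat \<Rightarrow> nat \<Rightarrow> real) \<Rightarrow> nat \<Rightarrow> real"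
  assumes mixed_fr: "payoff_matrix n R \<Longrightarrow> mixed_strategy n (fr R)"
    and mixed_fc: "payoff_matrix n C \<Longrightarrow> mixed_strategy n (fc C)"
    and equilibrium: "payoff_matrix n R \<Longrightarrow> payoff_matrix n C \<Longrightarrow> approx_nash \<epsilon> n R C (fr R) (fc C)"
begin

lemma row_deviation:
  "payoff_matrix n R \<Longrightarrow> payoff_matrix n C \<Longrightarrow> i < n \<Longrightarrow>
    payoff n (unit_vec i) R (fc C) \<le> payoff n (fr R) R (fc C) + \<epsilon>"
  using equilibrium by (simp add: approx_nash_def)

lemma column_deviation:
  "payoff_matrix n R \<Longrightarrow> payoff_matrix n C \<Longrightarrow> j < n \<Longrightarrow>
    payoff n (fr R) C (unit_vec j) \<le> payoff n (fr R) C (fc C) + \<epsilon>"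
  using equilibrium by (simp add: approx_nash_def)

lemma column_target_weight:
  assumes "t < n"
  shows "1 - \<epsilon> \<le> fc (column_target n t) t"
proof -
  define x y where "x = fr (\<lambda>_ _. 0)" and "y = fc (column_target n t)"
  have x: "mixed_strategy n x" using mixed_fr[OF payoff_matrix_zero] by (simp add: x_def)
  have "payoff n x (column_target n t) (unit_vec t) = (\<Sum>i<n. x i)"
    using assms by (auto simp: payoff_unit_vec_right column_target_def intro!: sum.cong)
  then have "payoff n x (column_target n t) (unit_vec t) = 1"
    using mixed_strategyD(2)[OF x] by simp
  moreover have "payoff n x (column_target n t) y = y t"
    using assms mixed_strategyD(2)[OF x]
    by (simp add: payoff_eq_sum_rows column_target_row_sum sum_distrib_right[symmetric])
  ultimately show ?thesis
    using column_deviation[OF payoff_matrix_zero payoff_matrix_column_target[of n t] assms]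
    by (simp add: x_def y_def)
qed

lemma epsilon_nonneg:
  assumes "0 < n"
  shows "0 \<le> \<epsilon>"
  using column_target_weight[OF assms] mixed_strategyD(3)[OF mixed_fc[OF payoff_matrix_column_target[of n 0]] assms]
  by linarith

lemma block_mass_bound:
  assumes "0 < g" "m * g \<le> n" "j < m" "payoff_matrix n R"
  shows "(\<Sum>i\<in>{j * g..<j * g + g}. fr R i) * (2 - fc (block_matrix g m) j) \<le> 1 + \<epsilon>"
proof -
  define Bl where "Bl = {j * g..<j * g + g}"
  define x y where "x = fr R" and "y = fc (block_matrix g m)"
  define P where "P = (\<Sum>i\<in>Bl. x i)"
  have C: "payoff_matrix n (block_matrix g m)" using payoff_matrix_block_matrix[OF assms(1,2)] .
  have x: "mixed_strategy n x" using mixed_fr[OF assms(4)] by (simp add: x_def)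
  have y: "mixed_strategy n y" using mixed_fc[OF C] by (simp add: y_def)
  have "m \<le> n" using le_trans[of m "m * g" n] assms by simp
  have "j * g + g \<le> m * g" using \<open>j < m\<close> by (metis Suc_leI mult_Suc mult_le_mono1 add.commute)
  then have Bl_sub: "Bl \<subseteq> {..<n}" using assms by (auto simp: Bl_def)
  have in_block: "i div g = j \<longleftrightarrow> i \<in> Bl" for i
    using div_eq_iff_in_block[OF \<open>0 < g\<close>] by (simp add: Bl_def)
  have "payoff n x (block_matrix g m) (unit_vec j) = (\<Sum>i<n. if i \<in> Bl then x i else 0)"
    using \<open>j < m\<close> \<open>m \<le> n\<close> in_block
    by (auto simp: payoff_unit_vec_right block_matrix_def intro!: sum.cong)
  also have "\<dots> = P" using Bl_sub by (simp add: sum.inter_restrict[symmetric] P_def Int_absorb1)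
  finally have deviation: "payoff n x (block_matrix g m) (unit_vec j) = P" .
  have "(\<Sum>k<n. block_matrix g m i k * y k) \<le> 1 - (if i \<in> Bl then 1 - y j else 0)" if "i < n" for i
    using mixed_strategyD[OF y] that \<open>j < m\<close> \<open>m \<le> n\<close>
    by (auto simp: block_matrix_row_sum in_block[symmetric])
  then have "payoff n x (block_matrix g m) y \<le> (\<Sum>i<n. x i * (1 - (if i \<in> Bl then 1 - y j else 0)))"
    unfolding payoff_eq_sum_rows using mixed_strategyD(1)[OF x]
    by (intro sum_mono mult_left_mono) auto
  also have "\<dots> = (\<Sum>i<n. x i - (if i \<in> Bl then x i * (1 - y j) else 0))"
    by (intro sum.cong) (auto simp: algebra_simps)
  also have "\<dots> = (\<Sum>i<n. x i) - (\<Sum>i<n. if i \<in> Bl then x i * (1 - y j) else 0)"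
    by (rule sum_subtractf)
  also have "\<dots> = 1 - P * (1 - y j)"
    using Bl_sub mixed_strategyD(2)[OF x]
    by (simp add: sum.inter_restrict[symmetric] Int_absorb1 P_def sum_distrib_right)
  finally show ?thesis
    using column_deviation[OF assms(4) C, of j] \<open>j < m\<close> \<open>m \<le> n\<close> deviation
    by (simp add: x_def y_def P_def Bl_def algebra_simps)
qed

lemma matching_row_bound:
  assumes B: "B \<subseteq> {..<n}" and G: "G \<subseteq> {..<n}" and \<sigma>: "bij_betw \<sigma> B G" and "i \<in> B"
  shows "1 \<le> \<epsilon> + \<epsilon> * (\<Sum>k\<in>B. fr (matching_matrix n B G \<sigma>) k)
      + (1 - \<epsilon>) * fr (matching_matrix n B G \<sigma>) i
      + 2 * (\<Sum>c\<in>G - {\<sigma> i}. fc (column_target n (\<sigma> i)) c)"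
proof -
  define R where "R = matching_matrix n B G \<sigma>"
  define t where "t = \<sigma> i"
  define x y where "x = fr R" and "y = fc (column_target n t)"
  define P J where "P = (\<Sum>k\<in>B. x k)" and "J = (\<Sum>c\<in>G - {t}. y c)"
  have "finite B" "finite G" using B G finite_subset by auto
  have \<sigma>B: "\<sigma> ` B \<subseteq> G" using \<sigma> by (simp add: bij_betw_def)
  then have "t \<in> G" "t < n" using G \<open>i \<in> B\<close> by (auto simp: t_def)
  have pmR: "payoff_matrix n R" using payoff_matrix_matching_matrix[OF B] by (simp add: R_def)
  have x: "mixed_strategy n x" using mixed_fr[OF pmR] by (simp add: x_def)
  have y: "mixed_strategy n y" using mixed_fc[OF payoff_matrix_column_target] by (simp add: y_def)
  have rest: "(\<Sum>j\<in>{..<n} - G. y j) = 1 - (J + y t)"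
    using sum.subset_diff[OF G finite_lessThan, of y] sum.remove[OF \<open>finite G\<close> \<open>t \<in> G\<close>, of y]
      mixed_strategyD(2)[OF y] by (simp add: J_def)
  have "(\<Sum>k\<in>B. x k * y (\<sigma> k)) \<le> x i * y t + J"
    unfolding t_def J_def
  proof (rule sum_bij_weighted_le[OF \<sigma> \<open>finite B\<close> \<open>i \<in> B\<close>])
    show "0 \<le> x k \<and> x k \<le> 1" if "k \<in> B" for k
      using that B mixed_strategyD(1,3)[OF x] by auto
    show "0 \<le> y c" if "c \<in> G" for c
      using that G mixed_strategyD(1)[OF y] by auto
  qed
  moreover have "payoff n x R y = (\<Sum>k\<in>B. x k * y (\<sigma> k)) + P * (1 - (J + y t))"
    using payoff_matching_matrix[OF B G \<sigma>B] rest by (simp add: R_def P_def)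
  moreover have "payoff n (unit_vec i) R y = 1 - J"
    using payoff_unit_vec_matching_matrix[OF B G \<sigma>B \<open>i \<in> B\<close>] rest by (simp add: R_def t_def)
  moreover have "payoff n (unit_vec i) R y \<le> payoff n x R y + \<epsilon>"
    using row_deviation[OF pmR payoff_matrix_column_target, of i t] \<open>i \<in> B\<close> B
    by (auto simp: x_def y_def)
  moreover have "(P - x i) * (1 - \<epsilon>) \<le> (P - x i) * y t"
  proof (rule mult_left_mono)
    show "1 - \<epsilon> \<le> y t" using column_target_weight[OF \<open>t < n\<close>] by (simp add: y_def)
    show "0 \<le> P - x i"
      using member_le_sum[OF \<open>i \<in> B\<close>, of x] mixed_strategyD(1)[OF x] B \<open>finite B\<close>
      by (auto simp: P_def)
  qed
  moreover have "0 \<le> P * J"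
    using mixed_strategyD(1)[OF x] mixed_strategyD(1)[OF y] B G
    by (auto simp: P_def J_def intro!: mult_nonneg_nonneg sum_nonneg)
  ultimately have "1 \<le> \<epsilon> + \<epsilon> * P + (1 - \<epsilon>) * x i + 2 * J"
    by (simp add: algebra_simps)
  then show ?thesis by (simp add: x_def R_def P_def J_def y_def t_def)
qed

lemma matching_average_bound:
  assumes B: "B \<subseteq> {..<n}" and G: "G \<subseteq> {..<n}" and \<sigma>: "bij_betw \<sigma> B G"
  shows "real (card B) \<le> real (card B) * (\<epsilon> + \<epsilon> * (\<Sum>k\<in>B. fr (matching_matrix n B G \<sigma>) k))
      + (1 - \<epsilon>) * (\<Sum>k\<in>B. fr (matching_matrix n B G \<sigma>) k)
      + 2 * (\<Sum>t\<in>G. \<Sum>c\<in>G - {t}. fc (column_target n t) c)"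
proof -
  define x P where "x = fr (matching_matrix n B G \<sigma>)" and "P = (\<Sum>k\<in>B. x k)"
  define J where "J t = (\<Sum>c\<in>G - {t}. fc (column_target n t) c)" for t
  have "real (card B) = (\<Sum>i\<in>B. 1)" by simp
  also have "\<dots> \<le> (\<Sum>i\<in>B. \<epsilon> + \<epsilon> * P + (1 - \<epsilon>) * x i + 2 * J (\<sigma> i))"
    using matching_row_bound[OF B G \<sigma>] by (intro sum_mono) (simp add: x_def P_def J_def)
  also have "\<dots> = real (card B) * (\<epsilon> + \<epsilon> * P) + (1 - \<epsilon>) * P + 2 * (\<Sum>t\<in>G. J t)"
    using sum.reindex_bij_betw[OF \<sigma>, of J]
    by (simp add: sum.distrib sum_distrib_left[symmetric] P_def)
  finally show ?thesis by (simp add: x_def P_def J_def)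
qed

lemma block_matching_bound:
  assumes "0 < g" "0 < m" "m * g \<le> n" "2 * g < n"
  shows "\<exists>P\<ge>0. P * (2 - 1 / real m) \<le> 1 + \<epsilon> \<and>
    real g \<le> real g * (\<epsilon> + \<epsilon> * P) + (1 - \<epsilon>) * P
      + 2 * (real g * (3 * real g / (real n / 2 - real g)))"
proof -
  have "payoff_matrix n (block_matrix g m)" using payoff_matrix_block_matrix assms by simp
  then obtain j where j: "j < m" "fc (block_matrix g m) j \<le> 1 / real m"
    using mixed_strategy_ex_le_inverse[OF mixed_fc, of _ m] le_trans[of m "m * g" n] assms by auto
  obtain G where G: "G \<subseteq> {..<n}" "card G = g"
    "(\<Sum>t\<in>G. \<Sum>c\<in>G - {t}. fc (column_target n t) c) \<le> real g * (3 * real g / (real n / 2 - real g))"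
    using ex_nearly_disjoint_strategies[of n "\<lambda>t. fc (column_target n t)" g]
      mixed_fc[OF payoff_matrix_column_target] assms by auto
  define B where "B = {j * g..<j * g + g}"
  have "j * g + g \<le> m * g" using \<open>j < m\<close> by (metis Suc_leI mult_Suc mult_le_mono1 add.commute)
  then have B: "B \<subseteq> {..<n}" "card B = g" using assms by (auto simp: B_def)
  have "finite G" using G(1) finite_subset by blast
  then obtain \<sigma> where \<sigma>: "bij_betw \<sigma> B G"
    using finite_same_card_bij[of B G] B(2) G(2) by (auto simp: B_def)
  define P where "P = (\<Sum>k\<in>B. fr (matching_matrix n B G \<sigma>) k)"
  have "0 \<le> P"
    using mixed_strategyD(1)[OF mixed_fr[OF payoff_matrix_matching_matrix[OF B(1)]]] B(1)
    by (auto simp: P_def intro!: sum_nonneg)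
  then have "P * (2 - 1 / real m) \<le> P * (2 - fc (block_matrix g m) j)"
    using j(2) by (intro mult_left_mono) auto
  also have "\<dots> \<le> 1 + \<epsilon>"
    using block_mass_bound[OF assms(1,3) j(1) payoff_matrix_matching_matrix[OF B(1)]]
    by (simp add: P_def B_def)
  finally show ?thesis
    using \<open>0 \<le> P\<close> matching_average_bound[OF B(1) G(1) \<sigma>] G(3) B(2)
    by (intro exI[of _ P]) (simp add: P_def)
qed

lemma epsilon_lower_bound:
  assumes "n = 4000"
  shows "0.501 \<le> \<epsilon>"
proof (rule ccontr)
  assume "\<not> 0.501 \<le> \<epsilon>"
  have "0 \<le> \<epsilon>" using epsilon_nonneg assms by simp
  obtain P where "0 \<le> P" and P: "P * (199 / 100) \<le> 1 + \<epsilon>"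
    and avg: "20 \<le> 20 * (\<epsilon> + \<epsilon> * P) + (1 - \<epsilon>) * P + 40 / 33"
    using block_matching_bound[of 20 100] assms by auto
  have "P * (19 * \<epsilon> + 1) \<le> (1 + \<epsilon>) * (100 / 199) * (19 * \<epsilon> + 1)"
    using P \<open>0 \<le> \<epsilon>\<close> by (intro mult_right_mono) auto
  moreover have "(1 + \<epsilon>) * (19 * \<epsilon> + 1) \<le> (1 + 0.501) * (19 * 0.501 + 1)"
    using \<open>\<not> 0.501 \<le> \<epsilon>\<close> \<open>0 \<le> \<epsilon>\<close> by (intro mult_mono) auto
  ultimately show False using avg \<open>\<not> 0.501 \<le> \<epsilon>\<close> by (simp add: algebra_simps)
qed

end

theorem theorem2:
  fixes \<epsilon> :: real
  assumes "\<epsilon> < 0.501"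
  shows "\<not> (\<exists>(fr :: nat \<Rightarrow> (nat \<Rightarrow> nat \<Rightarrow> real) \<Rightarrow> nat \<Rightarrow> real)
               (fc :: nat \<Rightarrow> (nat \<Rightarrow> nat \<Rightarrow> real) \<Rightarrow> nat \<Rightarrow> real).
            (\<forall>n R. 1 \<le> n \<longrightarrow> payoff_matrix n R \<longrightarrow> mixed_strategy n (fr n R)) \<and>
            (\<forall>n C. 1 \<le> n \<longrightarrow> payoff_matrix n C \<longrightarrow> mixed_strategy n (fc n C)) \<and>
            (\<forall>n R C. 1 \<le> n \<longrightarrow> payoff_matrix n R \<longrightarrow> payoff_matrix n C \<longrightarrow>
                approx_nash \<epsilon> n R C (fr n R) (fc n C)))"
proof
  assume "\<exists>fr fc.
            (\<forall>n R. 1 \<le> n \<longrightarrow> payoff_matrix n R \<longrightarrow> mixed_strategy n (fr n R)) \<and>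
            (\<forall>n C. 1 \<le> n \<longrightarrow> payoff_matrix n C \<longrightarrow> mixed_strategy n (fc n C)) \<and>
            (\<forall>n R C. 1 \<le> n \<longrightarrow> payoff_matrix n R \<longrightarrow> payoff_matrix n C \<longrightarrow>
                approx_nash \<epsilon> n R C (fr n R) (fc n C))"
  then obtain fr fc :: "nat \<Rightarrow> (nat \<Rightarrow> nat \<Rightarrow> real) \<Rightarrow> nat \<Rightarrow> real" where
    "\<forall>n R. 1 \<le> n \<longrightarrow> payoff_matrix n R \<longrightarrow> mixed_strategy n (fr n R)"
    "\<forall>n C. 1 \<le> n \<longrightarrow> payoff_matrix n C \<longrightarrow> mixed_strategy n (fc n C)"
    "\<forall>n R C. 1 \<le> n \<longrightarrow> payoff_matrix n R \<longrightarrow> payoff_matrix n C \<longrightarrow>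
       approx_nash \<epsilon> n R C (fr n R) (fc n C)"
    by blast
  then interpret uncoupled_approx_nash \<epsilon> 4000 "fr 4000" "fc 4000"
    by unfold_locales auto
  show False using epsilon_lower_bound[OF refl] assms by simp
qed

end
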